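(* Assume that $N\le p$. Then $(k[U_N])_{[e-1]}\subset k[U_N]_{<d}\subset(k[U_N])_{[(p-1)(d-1)]}$ provided that $e(N-1)<d$.
   Context: $k$ is an algebraically closed field of characteristic $p>0$; $k[\mathbb G_a]=k[T]$. $U_N\subset GL_N$ is the group of upper triangular unipotent $N\times N$ matrices, $k[U_N]=k[x_{i,j}:1\le i<j\le N]$, and $k[U_N]_{<d}$ is the subspace of polynomials of total degree $<d$ in the $x_{i,j}$. $U_N$ carries the structure of exponential type $\mathcal E_B(t)=\exp_B(t)=\sum_{n=0}^{p-1}(tB)^n/n!$ for strictly upper triangular $B$ with $B^p=0$. $(k[U_N])_{[d]}$ is the set of $f\in k[U_N]$ such that $\exp_B^*(f)\in k[T]$ has degree $\le d$ for all such $B$. *)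

theory Defs
  imports "HOL-Library.Poly_Mapping" "HOL-Computational_Algebra.Polynomial" "Jordan_Normal_Form.Matrix"
begin

text \<open>Polynomials in the variables x_(i,j) are finitely supported maps from monomials
(finitely supported exponent vectors indexed by variable pairs (i,j)) to coefficients.
Indices are 0-based: variable x_(i,j) with i < j < N corresponds to x_(i+1,j+1) in the paper.\<close>

type_synonym 'a mpoly_ij = "((nat \<times> nat) \<Rightarrow>\<^sub>0 nat) \<Rightarrow>\<^sub>0 'a"

definition kU :: "nat \<Rightarrow> 'a::field mpoly_ij set" where
  "kU N = {f. \<forall>m \<in> Poly_Mapping.keys f. \<forall>v \<in> Poly_Mapping.keys m. fst v < snd v \<and> snd v < N}"

definition mon_deg :: "((nat \<times> nat) \<Rightarrow>\<^sub>0 nat) \<Rightarrow> nat" where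
  "mon_deg m = (\<Sum>v\<in>Poly_Mapping.keys m. Poly_Mapping.lookup m v)"

definition kU_lt :: "nat \<Rightarrow> nat \<Rightarrow> 'a::field mpoly_ij set" where
  "kU_lt N d = {f \<in> kU N. \<forall>m \<in> Poly_Mapping.keys f. mon_deg m < d}"

definition strict_upper :: "nat \<Rightarrow> 'a::field mat \<Rightarrow> bool" where
  "strict_upper N B \<longleftrightarrow> B \<in> carrier_mat N N \<and> (\<forall>i<N. \<forall>j<N. j \<le> i \<longrightarrow> B $$ (i,j) = 0)"

definition exp_entry :: "nat \<Rightarrow> 'a::field mat \<Rightarrow> nat \<times> nat \<Rightarrow> 'a poly" where
  "exp_entry p B v = (\<Sum>n<p. Polynomial.monom (((B ^\<^sub>m n) $$ v) / of_nat (fact n)) n)"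

definition exp_pullback :: "nat \<Rightarrow> 'a::field mat \<Rightarrow> 'a mpoly_ij \<Rightarrow> 'a poly" where
  "exp_pullback p B f =
     (\<Sum>m\<in>Poly_Mapping.keys f. Polynomial.smult (Poly_Mapping.lookup f m) (\<Prod>v\<in>Poly_Mapping.keys m. (exp_entry p B v) ^ Poly_Mapping.lookup m v))"

definition kU_filt :: "nat \<Rightarrow> nat \<Rightarrow> nat \<Rightarrow> 'a::field mpoly_ij set" where
  "kU_filt p N d = {f \<in> kU N. \<forall>B. strict_upper N B \<and> B ^\<^sub>m p = 0\<^sub>m N N
        \<longrightarrow> degree (exp_pullback p B f) \<le> d}"

end

(*
  Second inclusion: every entry of exp_B(t) has degree at most p - 1 in t, so a monomial of
  degree < d pulls back to a polynomial of degree at most (p - 1)(d - 1).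

  First inclusion: every monomial x^m of f in (k[U_N])_[D] has degree at most D (N - 1), for any
  infinite field k. Replace B by the one-parameter matrix X(s) with entries s^c(i,j) above the
  diagonal, where the weights c are strictly superadditive along chains i < k < j, and put
  Q(s,T) = f(exp(T X(s))) in k[s][T]. Every specialisation s = z has T-degree at most D, hence so
  has Q; the T^a-coefficient of Q has s-degree at most K a, where K bounds c; so Q(s,1) has
  s-degree at most K D. On the other hand superadditivity makes s^c(i,j) the leading term of
  exp(X(s))_(i,j), so x^m contributes the leading term f_m s^(sum_v m_v c(v)) to Q(s,1).
  The Kronecker-type weights c(i,j) = W (j - i) + beta^(index of (i,j)) make these exponents
  pairwise distinct on the support of f, whence W deg m <= (W (N - 1) + beta^(N N)) D, and
  W > beta^(N N) D gives deg m <= D (N - 1).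
*)

theory Submission
  imports Defs "Jordan_Normal_Form.Char_Poly"
begin

lemma index_mult_mat_sum:
  assumes "A \<in> carrier_mat n n" "B \<in> carrier_mat n n" "i < n" "j < n"
  shows "(A * B) $$ (i,j) = (\<Sum>k<n. A $$ (i,k) * B $$ (k,j))"
  using assms by (auto simp: scalar_prod_def lessThan_atLeast0 intro!: sum.cong)

lemma strict_upper_pow_index_eq_0:
  fixes B :: "'b::semiring_1 mat"
  assumes B: "B \<in> carrier_mat N N" and upper: "\<forall>i<N. \<forall>j<N. j \<le> i \<longrightarrow> B $$ (i,j) = 0"
    and "i < N" "j < N" "j < i + n"
  shows "(B ^\<^sub>m n) $$ (i,j) = 0"
  using assms(3-)
proof (induction n arbitrary: j)
  case 0
  then show ?case using B by auto
next
  case (Suc n)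
  have "(B ^\<^sub>m Suc n) $$ (i,j) = (B ^\<^sub>m n * B) $$ (i,j)"
    by simp
  also have "\<dots> = (\<Sum>k<N. (B ^\<^sub>m n) $$ (i,k) * B $$ (k,j))"
    using Suc.prems B by (intro index_mult_mat_sum) auto
  also have "\<dots> = 0"
  proof (rule sum.neutral, intro ballI)
    fix k assume "k \<in> {..<N}"
    then show "(B ^\<^sub>m n) $$ (i,k) * B $$ (k,j) = 0"
      using Suc upper by (cases "k < i + n") auto
  qed
  finally show ?case .
qed

lemma strict_upper_pow_eq_0:
  fixes B :: "'b::semiring_1 mat"
  assumes "B \<in> carrier_mat N N" "\<forall>i<N. \<forall>j<N. j \<le> i \<longrightarrow> B $$ (i,j) = 0" "N \<le> n"
  shows "B ^\<^sub>m n = 0\<^sub>m N N"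
  using assms strict_upper_pow_index_eq_0[OF assms(1,2)] by (intro eq_matI) auto

definition upper_pairs :: "nat \<Rightarrow> (nat \<times> nat) set" where
  "upper_pairs N = {(i,j). i < j \<and> j < N}"

lemma kU_keys_subset_upper_pairs: "f \<in> kU N \<Longrightarrow> m \<in> Poly_Mapping.keys f \<Longrightarrow> Poly_Mapping.keys m \<subseteq> upper_pairs N"
  unfolding kU_def upper_pairs_def by fastforce

definition superadditive_weights :: "nat \<Rightarrow> (nat \<times> nat \<Rightarrow> nat) \<Rightarrow> bool" where
  "superadditive_weights N c \<longleftrightarrow> (\<forall>i j. i < j \<longrightarrow> j < N \<longrightarrow> 0 < c (i,j)) \<and>
     (\<forall>i k j. i < k \<longrightarrow> k < j \<longrightarrow> j < N \<longrightarrow> c (i,k) + c (k,j) < c (i,j))"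

definition weighted_mat :: "nat \<Rightarrow> (nat \<times> nat \<Rightarrow> nat) \<Rightarrow> 'a::field poly mat" where
  "weighted_mat N c = mat N N (\<lambda>(i,j). if i < j then monom 1 (c (i,j)) else 0)"

lemma weighted_mat_carrier [simp]: "weighted_mat N c \<in> carrier_mat N N"
  by (simp add: weighted_mat_def)

lemma weighted_mat_dim [simp]: "dim_row (weighted_mat N c) = N" "dim_col (weighted_mat N c) = N"
  by (simp_all add: weighted_mat_def)

lemma weighted_mat_strict_upper: "\<forall>i<N. \<forall>j<N. j \<le> i \<longrightarrow> weighted_mat N c $$ (i,j) = 0"
  by (simp add: weighted_mat_def)

lemma weighted_mat_index:
  "i < j \<Longrightarrow> j < N \<Longrightarrow> weighted_mat N c $$ (i,j) = monom 1 (c (i,j))"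
  by (simp add: weighted_mat_def)

lemma degree_mult_weighted_mat_less:
  fixes A :: "'a::field poly mat"
  assumes c: "superadditive_weights N c" and A: "A \<in> carrier_mat N N"
    and below: "\<And>k. k \<le> i \<Longrightarrow> k < N \<Longrightarrow> A $$ (i,k) = 0"
    and above: "\<And>k. i < k \<Longrightarrow> k < N \<Longrightarrow> degree (A $$ (i,k)) \<le> c (i,k)"
    and ij: "i < j" "j < N"
  shows "degree ((A * weighted_mat N c) $$ (i,j)) < c (i,j)"
proof -
  have "degree (A $$ (i,k) * weighted_mat N c $$ (k,j)) < c (i,j)" if "k < N" for k
  proof (cases "i < k \<and> k < j")
    case True
    have "degree (A $$ (i,k) * weighted_mat N c $$ (k,j)) \<le> c (i,k) + c (k,j)"
      using above[of k] True ij
      by (intro order.trans[OF degree_mult_le]) (simp add: weighted_mat_index degree_monom_eq)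
    also have "\<dots> < c (i,j)" using c True ij by (simp add: superadditive_weights_def)
    finally show ?thesis .
  next
    case False
    then have "A $$ (i,k) * weighted_mat N c $$ (k,j) = 0"
      using below[of k] that ij by (auto simp: weighted_mat_def)
    then show ?thesis using c ij by (auto simp: superadditive_weights_def)
  qed
  moreover have "0 < c (i,j)" using c ij by (simp add: superadditive_weights_def)
  ultimately have "degree (\<Sum>k<N. A $$ (i,k) * weighted_mat N c $$ (k,j)) < c (i,j)"
    by (intro degree_sum_less) auto
  then show ?thesis
    using A ij by (subst index_mult_mat_sum) auto
qed

lemma degree_weighted_mat_pow_mult_less:
  fixes N :: nat and c :: "nat \<times> nat \<Rightarrow> nat"
  defines "X \<equiv> weighted_mat N c :: 'a::field poly mat"
  assumes c: "superadditive_weights N c" and "0 < n" "i < j" "j < N"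
    and IH: "\<And>k. i < k \<Longrightarrow> k < N \<Longrightarrow> degree ((X ^\<^sub>m n) $$ (i,k)) \<le> c (i,k)"
  shows "degree ((X ^\<^sub>m n * X) $$ (i,j)) < c (i,j)"
  unfolding X_def
proof (rule degree_mult_weighted_mat_less[OF c])
  show "(weighted_mat N c ^\<^sub>m n) $$ (i,k) = 0" if "k \<le> i" "k < N" for k
    using assms that
    by (intro strict_upper_pow_index_eq_0[OF weighted_mat_carrier weighted_mat_strict_upper]) auto
qed (use assms in auto)

lemma degree_weighted_mat_pow_le:
  assumes c: "superadditive_weights N c" and "0 < n" "i < j" "j < N"
  shows "degree ((weighted_mat N c ^\<^sub>m n :: 'a::field poly mat) $$ (i,j)) \<le> c (i,j)"
  using assms(2-)
proof (induction n arbitrary: j)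
  case 0
  then show ?case by simp
next
  case (Suc n)
  show ?case
  proof (cases "n = 0")
    case True
    then show ?thesis using Suc.prems by (simp add: weighted_mat_index degree_monom_eq)
  next
    case False
    have "degree ((weighted_mat N c ^\<^sub>m n * weighted_mat N c :: 'a poly mat) $$ (i,j)) < c (i,j)"
      by (rule degree_weighted_mat_pow_mult_less[OF c]) (use Suc False in auto)
    then show ?thesis by simp
  qed
qed

lemma degree_weighted_mat_pow_less:
  assumes c: "superadditive_weights N c" and "1 < n" "i < j" "j < N"
  shows "degree ((weighted_mat N c ^\<^sub>m n :: 'a::field poly mat) $$ (i,j)) < c (i,j)"
proof -
  obtain n' where n: "n = Suc n'" "0 < n'" using assms(2) by (cases n) auto
  have "degree ((weighted_mat N c ^\<^sub>m n' * weighted_mat N c :: 'a poly mat) $$ (i,j)) < c (i,j)"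
    by (rule degree_weighted_mat_pow_mult_less[OF c])
      (use assms n degree_weighted_mat_pow_le[OF c] in auto)
  then show ?thesis using n by simp
qed

lemma degree_weighted_mat_pow_le_mult:
  assumes c: "superadditive_weights N c" and K: "\<forall>v\<in>upper_pairs N. c v \<le> K" and "i < j" "j < N"
  shows "degree ((weighted_mat N c ^\<^sub>m n :: 'a::field poly mat) $$ (i,j)) \<le> K * n"
proof (cases "n = 0")
  case True
  then show ?thesis using assms by simp
next
  case False
  then have "degree ((weighted_mat N c ^\<^sub>m n :: 'a poly mat) $$ (i,j)) \<le> c (i,j)"
    using assms by (intro degree_weighted_mat_pow_le) auto
  also have "\<dots> \<le> K" using K assms by (auto simp: upper_pairs_def)
  also have "\<dots> \<le> K * n" using False by simp
  finally show ?thesis .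
qed

definition exp_entry_poly :: "nat \<Rightarrow> 'a::field poly mat \<Rightarrow> nat \<times> nat \<Rightarrow> 'a poly poly" where
  "exp_entry_poly p X v = (\<Sum>n<p. monom (Polynomial.smult (inverse (of_nat (fact n))) ((X ^\<^sub>m n) $$ v)) n)"

definition exp_pullback_poly :: "nat \<Rightarrow> 'a::field poly mat \<Rightarrow> 'a mpoly_ij \<Rightarrow> 'a poly poly" where
  "exp_pullback_poly p X f = (\<Sum>m\<in>Poly_Mapping.keys f. Polynomial.smult [:Poly_Mapping.lookup f m:]
     (\<Prod>v\<in>Poly_Mapping.keys m. exp_entry_poly p X v ^ Poly_Mapping.lookup m v))"

lemma map_poly_exp_entry_poly:
  fixes X :: "'a::field poly mat"
  assumes X: "X \<in> carrier_mat N N" and v: "v \<in> upper_pairs N"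
  shows "map_poly (\<lambda>q. poly q z) (exp_entry_poly p X v) = exp_entry p (map_mat (\<lambda>q. poly q z) X) v"
proof -
  interpret h: map_poly_comm_ring_hom "\<lambda>q::'a poly. poly q z" ..
  have hs: "semiring_hom (\<lambda>q::'a poly. poly q z)" by unfold_locales auto
  have "(map_mat (\<lambda>q. poly q z) X ^\<^sub>m n) $$ v = poly ((X ^\<^sub>m n) $$ v) z" for n
    using semiring_hom.mat_hom_pow[OF hs X, symmetric] X v by (auto simp: upper_pairs_def)
  then show ?thesis
    unfolding exp_entry_poly_def exp_entry_def h.hom_sum
    by (intro sum.cong) (auto simp: divide_inverse mult.commute)
qed

lemma map_poly_exp_pullback_poly:
  fixes X :: "'a::field poly mat"
  assumes X: "X \<in> carrier_mat N N" and f: "f \<in> kU N"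
  shows "map_poly (\<lambda>q. poly q z) (exp_pullback_poly p X f) = exp_pullback p (map_mat (\<lambda>q. poly q z) X) f"
proof -
  interpret h: map_poly_comm_ring_hom "\<lambda>q::'a poly. poly q z" ..
  have smult_const: "map_poly (\<lambda>q. poly q z) (Polynomial.smult [:a:] P) = Polynomial.smult a (map_poly (\<lambda>q. poly q z) P)"
    for a and P :: "'a poly poly"
    by (rule poly_eqI) (simp add: coeff_map_poly)
  have "map_poly (\<lambda>q. poly q z) (\<Prod>v\<in>Poly_Mapping.keys m. exp_entry_poly p X v ^ Poly_Mapping.lookup m v) =
      (\<Prod>v\<in>Poly_Mapping.keys m. exp_entry p (map_mat (\<lambda>q. poly q z) X) v ^ Poly_Mapping.lookup m v)"
    if "m \<in> Poly_Mapping.keys f" for m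
    using map_poly_exp_entry_poly[OF X] kU_keys_subset_upper_pairs[OF f that]
    by (auto simp: h.hom_prod h.hom_power intro!: prod.cong)
  then show ?thesis
    unfolding exp_pullback_poly_def exp_pullback_def h.hom_sum
    by (intro sum.cong refl) (simp add: smult_const)
qed

lemma poly_exp_pullback_poly_1:
  "poly (exp_pullback_poly p X f) 1 = (\<Sum>m\<in>Poly_Mapping.keys f. Polynomial.smult (Poly_Mapping.lookup f m)
     (\<Prod>v\<in>Poly_Mapping.keys m. poly (exp_entry_poly p X v) 1 ^ Poly_Mapping.lookup m v))"
  by (simp add: exp_pullback_poly_def poly_sum poly_prod)

definition slope_bounded :: "nat \<Rightarrow> 'a::comm_semiring_1 poly poly \<Rightarrow> bool" where
  "slope_bounded K Q \<longleftrightarrow> (\<forall>a. degree (coeff Q a) \<le> K * a)"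

lemma slope_bounded_0: "slope_bounded K 0"
  by (simp add: slope_bounded_def)

lemma slope_bounded_1: "slope_bounded K 1"
  by (simp add: slope_bounded_def coeff_1)

lemma slope_bounded_add: "slope_bounded K P \<Longrightarrow> slope_bounded K Q \<Longrightarrow> slope_bounded K (P + Q)"
  unfolding slope_bounded_def by (auto intro: order.trans[OF degree_add_le_max])

lemma slope_bounded_mult:
  assumes "slope_bounded K P" "slope_bounded K Q"
  shows "slope_bounded K (P * Q)"
  unfolding slope_bounded_def coeff_mult
proof (intro allI degree_sum_le)
  fix n i :: nat assume "i \<in> {..n}"
  then have "degree (coeff P i) + degree (coeff Q (n - i)) \<le> K * n"
    using assms add_mono[of "degree (coeff P i)" "K * i" "degree (coeff Q (n - i))" "K * (n - i)"]
    by (simp add: slope_bounded_def flip: add_mult_distrib2)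
  then show "degree (coeff P i * coeff Q (n - i)) \<le> K * n"
    by (rule order.trans[OF degree_mult_le])
qed simp

lemma slope_bounded_sum: "(\<And>x. x \<in> S \<Longrightarrow> slope_bounded K (f x)) \<Longrightarrow> slope_bounded K (sum f S)"
  by (induction S rule: infinite_finite_induct) (auto intro: slope_bounded_add slope_bounded_0)

lemma slope_bounded_prod: "(\<And>x. x \<in> S \<Longrightarrow> slope_bounded K (f x)) \<Longrightarrow> slope_bounded K (prod f S)"
  by (induction S rule: infinite_finite_induct) (auto intro: slope_bounded_mult slope_bounded_1)

lemma slope_bounded_power: "slope_bounded K P \<Longrightarrow> slope_bounded K (P ^ n)"
  by (induction n) (auto intro: slope_bounded_mult slope_bounded_1)

lemma slope_bounded_smult_const: "slope_bounded K Q \<Longrightarrow> slope_bounded K (Polynomial.smult [:c:] Q)"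
  unfolding slope_bounded_def by (auto intro: order.trans[OF degree_smult_le])

lemma degree_poly_1_le_if_slope_bounded:
  assumes "slope_bounded K Q"
  shows "degree (poly Q 1) \<le> K * degree Q"
  unfolding poly_altdef
proof (intro degree_sum_le)
  fix i assume "i \<in> {..degree Q}"
  then show "degree (coeff Q i * 1 ^ i) \<le> K * degree Q"
    using assms by (auto simp: slope_bounded_def intro: order.trans)
qed simp

lemma slope_bounded_exp_pullback_poly:
  fixes X :: "'a::field poly mat"
  assumes f: "f \<in> kU N"
    and X: "\<And>n i j. i < j \<Longrightarrow> j < N \<Longrightarrow> degree ((X ^\<^sub>m n) $$ (i,j)) \<le> K * n"
  shows "slope_bounded K (exp_pullback_poly p X f)"
  unfolding exp_pullback_poly_def
proof (intro slope_bounded_sum slope_bounded_smult_const slope_bounded_prod slope_bounded_power)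
  fix m v assume "m \<in> Poly_Mapping.keys f" "v \<in> Poly_Mapping.keys m"
  then obtain i j where "v = (i,j)" "i < j" "j < N"
    using kU_keys_subset_upper_pairs[OF f] by (cases v) (force simp: upper_pairs_def)
  then show "slope_bounded K (exp_entry_poly p X v)"
    using X unfolding slope_bounded_def exp_entry_poly_def
    by (auto simp: coeff_sum coeff_monom intro: order.trans[OF degree_smult_le])
qed

lemma alg_closed_field_infinite: "infinite (UNIV :: 'a::alg_closed_field set)"
proof
  assume fin: "finite (UNIV :: 'a set)"
  define q :: "'a poly" where "q = (\<Prod>a\<in>UNIV. [:-a, 1:]) + 1"
  have "degree (\<Prod>a\<in>(UNIV::'a set). [:-a, 1:]) = card (UNIV :: 'a set)"
    by (subst degree_prod_eq_sum_degree) auto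
  moreover have "card (UNIV :: 'a set) > 0" using fin by (simp add: card_gt_0_iff)
  ultimately have "degree q > 0" unfolding q_def by (subst degree_add_eq_left) auto
  then obtain x where "poly q x = 0" using alg_closed_imp_poly_has_root by blast
  moreover have "poly (\<Prod>a\<in>(UNIV::'a set). [:-a, 1:]) x = 0"
    using fin by (simp add: poly_prod prod_zero_iff)
  ultimately show False unfolding q_def by simp
qed

lemma degree_le_if_specializations_le:
  fixes Q :: "'a::field poly poly"
  assumes inf: "infinite (UNIV :: 'a set)" and deg: "\<And>z. degree (map_poly (\<lambda>q. poly q z) Q) \<le> D"
  shows "degree Q \<le> D"
proof (rule ccontr)
  assume "\<not> degree Q \<le> D"
  then have "lead_coeff Q \<noteq> 0" by auto
  then have "{z. poly (lead_coeff Q) z = 0} \<noteq> UNIV" using poly_roots_finite inf by metis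
  then obtain z where "poly (lead_coeff Q) z \<noteq> 0" by blast
  then have "degree Q \<le> degree (map_poly (\<lambda>q. poly q z) Q)"
    by (intro le_degree) (simp add: coeff_map_poly)
  with deg[of z] \<open>\<not> degree Q \<le> D\<close> show False by simp
qed

lemma degree_exp_pullback_poly_le:
  fixes X :: "'a::field poly mat"
  assumes inf: "infinite (UNIV :: 'a set)" and "N \<le> p" and f: "f \<in> kU_filt p N D"
    and X: "X \<in> carrier_mat N N" "\<forall>i<N. \<forall>j<N. j \<le> i \<longrightarrow> X $$ (i,j) = 0"
  shows "degree (exp_pullback_poly p X f) \<le> D"
proof (rule degree_le_if_specializations_le[OF inf])
  fix z
  define B where "B = map_mat (\<lambda>q. poly q z) X"
  have "strict_upper N B" using X by (auto simp: B_def strict_upper_def)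
  moreover have "B ^\<^sub>m p = 0\<^sub>m N N"
    using X \<open>N \<le> p\<close> by (intro strict_upper_pow_eq_0) (auto simp: B_def)
  moreover have "map_poly (\<lambda>q. poly q z) (exp_pullback_poly p X f) = exp_pullback p B f"
    using f unfolding B_def kU_filt_def by (intro map_poly_exp_pullback_poly[OF X(1)]) simp
  ultimately show "degree (map_poly (\<lambda>q. poly q z) (exp_pullback_poly p X f)) \<le> D"
    using f by (simp add: kU_filt_def)
qed

definition mon_weight :: "(nat \<times> nat \<Rightarrow> nat) \<Rightarrow> (nat \<times> nat \<Rightarrow>\<^sub>0 nat) \<Rightarrow> nat" where
  "mon_weight c m = (\<Sum>v\<in>Poly_Mapping.keys m. Poly_Mapping.lookup m v * c v)"

lemma lookup_le_mon_deg: "Poly_Mapping.lookup m v \<le> mon_deg m"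
  by (cases "v \<in> Poly_Mapping.keys m") (auto simp: mon_deg_def in_keys_iff intro: member_le_sum)

lemma mon_weight_mono:
  "(\<And>v. v \<in> Poly_Mapping.keys m \<Longrightarrow> c v \<le> c' v) \<Longrightarrow> mon_weight c m \<le> mon_weight c' m"
  unfolding mon_weight_def by (intro sum_mono) simp

lemma mon_weight_const: "mon_weight (\<lambda>_. a) m = a * mon_deg m"
  by (simp add: mon_weight_def mon_deg_def sum_distrib_left mult.commute)

lemma mon_weight_linear: "mon_weight (\<lambda>v. W * g v + h v) m = W * mon_weight g m + mon_weight h m"
  by (simp add: mon_weight_def sum_distrib_left sum.distrib algebra_simps)

lemma leading_term_poly_exp_entry_weighted_mat_1:
  fixes p N i j :: nat and c :: "nat \<times> nat \<Rightarrow> nat"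
  defines "g \<equiv> poly (exp_entry_poly p (weighted_mat N c :: 'a::field poly mat) (i,j)) 1"
  assumes c: "superadditive_weights N c" and "2 \<le> p" and ij: "i < j" "j < N"
  shows "degree g = c (i,j) \<and> lead_coeff g = 1"
proof -
  let ?X = "weighted_mat N c :: 'a poly mat"
  let ?t = "\<lambda>n. inverse (of_nat (fact n)) * coeff ((?X ^\<^sub>m n) $$ (i,j)) (c (i,j))"
  have g: "g = (\<Sum>n<p. Polynomial.smult (inverse (of_nat (fact n))) ((?X ^\<^sub>m n) $$ (i,j)))"
    by (simp add: g_def exp_entry_poly_def poly_sum poly_monom)
  have higher: "?t n = 0" if "n \<noteq> 1" for n
  proof (cases "n = 0")
    case True
    then show ?thesis using assms by (simp add: weighted_mat_def)
  next
    case False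
    with that have "degree ((?X ^\<^sub>m n) $$ (i,j)) < c (i,j)"
      by (intro degree_weighted_mat_pow_less[OF c _ ij]) simp
    then show ?thesis by (simp add: coeff_eq_0)
  qed
  have "coeff g (c (i,j)) = ?t 1 + (\<Sum>n\<in>{..<p} - {1}. ?t n)"
    unfolding g coeff_sum coeff_smult using assms by (subst sum.remove[of _ 1]) auto
  also have "(\<Sum>n\<in>{..<p} - {1}. ?t n) = 0"
    by (rule sum.neutral) (use higher in blast)
  also have "?t 1 = 1"
    using ij by (simp add: weighted_mat_index)
  finally have coeff_c: "coeff g (c (i,j)) = 1" by simp
  have "degree g \<le> c (i,j)"
    unfolding g
  proof (intro degree_sum_le order.trans[OF degree_smult_le])
    fix n show "degree ((?X ^\<^sub>m n) $$ (i,j)) \<le> c (i,j)"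
      using assms degree_weighted_mat_pow_le[OF c] by (cases "n = 0") auto
  qed simp
  moreover have "c (i,j) \<le> degree g" using coeff_c by (intro le_degree) simp
  ultimately show ?thesis using coeff_c by simp
qed

lemma monic_prod_power:
  fixes g :: "'b \<Rightarrow> 'a::idom poly"
  assumes "\<And>v. v \<in> S \<Longrightarrow> degree (g v) = c v \<and> lead_coeff (g v) = 1"
  shows "degree (\<Prod>v\<in>S. g v ^ k v) = (\<Sum>v\<in>S. k v * c v) \<and> lead_coeff (\<Prod>v\<in>S. g v ^ k v) = 1"
proof -
  have "g v \<noteq> 0" if "v \<in> S" for v using assms[OF that] by auto
  then have deg: "degree (\<Prod>v\<in>S. g v ^ k v) = (\<Sum>v\<in>S. k v * c v)"
    using assms by (subst degree_prod_eq_sum_degree) (auto simp: degree_power_eq intro!: sum.cong)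
  have "lead_coeff (\<Prod>v\<in>S. g v ^ k v) = (\<Prod>v\<in>S. lead_coeff (g v) ^ k v)"
    by (simp add: lead_coeff_prod lead_coeff_power)
  also have "\<dots> = 1"
    using assms by (intro prod.neutral ballI) (metis power_one)
  finally show ?thesis using deg by simp
qed

lemma degree_le_degree_sum_of_distinct_degrees:
  fixes g :: "'b \<Rightarrow> 'a::comm_ring_1 poly"
  assumes S: "finite S" and inj: "inj_on (\<lambda>x. degree (g x)) S"
    and nz: "\<And>x. x \<in> S \<Longrightarrow> g x \<noteq> 0" and "x \<in> S"
  shows "degree (g x) \<le> degree (sum g S)"
proof -
  define M where "M = Max ((\<lambda>x. degree (g x)) ` S)"
  have "M \<in> (\<lambda>x. degree (g x)) ` S"
    unfolding M_def using S \<open>x \<in> S\<close> by (intro Max_in) auto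
  then obtain y where y: "y \<in> S" "degree (g y) = M" by auto
  have "coeff (g z) M = 0" if "z \<in> S - {y}" for z
  proof -
    have "degree (g z) \<noteq> M" using inj y that by (auto dest: inj_onD)
    moreover have "degree (g z) \<le> M" using S that unfolding M_def by simp
    ultimately show ?thesis by (simp add: coeff_eq_0)
  qed
  then have "coeff (sum g S) M = coeff (g y) M"
    unfolding coeff_sum using S y by (simp add: sum.remove)
  also have "\<dots> \<noteq> 0" using nz y by (simp flip: y(2))
  finally have "M \<le> degree (sum g S)" by (rule le_degree)
  moreover have "degree (g x) \<le> M" using S \<open>x \<in> S\<close> unfolding M_def by simp
  ultimately show ?thesis by simp
qed

lemma mon_weight_le_degree_poly_exp_pullback_poly_1:
  assumes c: "superadditive_weights N c" and p: "2 \<le> p" and f: "f \<in> kU N"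
    and inj: "inj_on (mon_weight c) (Poly_Mapping.keys f)" and m: "m \<in> Poly_Mapping.keys f"
  shows "mon_weight c m \<le> degree (poly (exp_pullback_poly p (weighted_mat N c :: 'a::field poly mat) f) 1)"
proof -
  define E where "E v = poly (exp_entry_poly p (weighted_mat N c :: 'a poly mat) v) 1" for v
  define g where "g m = Polynomial.smult (Poly_Mapping.lookup f m)
    (\<Prod>v\<in>Poly_Mapping.keys m. E v ^ Poly_Mapping.lookup m v)" for m
  have g: "degree (g m) = mon_weight c m \<and> g m \<noteq> 0" if m: "m \<in> Poly_Mapping.keys f" for m
  proof -
    have "degree (E v) = c v \<and> lead_coeff (E v) = 1" if "v \<in> Poly_Mapping.keys m" for v
    proof -
      have "v \<in> upper_pairs N"
        using kU_keys_subset_upper_pairs[OF f m] that by blast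
      then obtain i j where "v = (i,j)" "i < j" "j < N"
        by (auto simp: upper_pairs_def)
      then show ?thesis
        using leading_term_poly_exp_entry_weighted_mat_1[OF c p] by (simp add: E_def)
    qed
    then have P: "degree (\<Prod>v\<in>Poly_Mapping.keys m. E v ^ Poly_Mapping.lookup m v) = mon_weight c m \<and>
        lead_coeff (\<Prod>v\<in>Poly_Mapping.keys m. E v ^ Poly_Mapping.lookup m v) = 1"
      unfolding mon_weight_def by (rule monic_prod_power)
    then have "(\<Prod>v\<in>Poly_Mapping.keys m. E v ^ Poly_Mapping.lookup m v) \<noteq> 0"
      by (metis leading_coeff_0_iff zero_neq_one)
    moreover have "Poly_Mapping.lookup f m \<noteq> 0" using m by (simp add: in_keys_iff)
    ultimately show ?thesis using P by (simp add: g_def)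
  qed
  have "degree (g m) \<le> degree (sum g (Poly_Mapping.keys f))"
    using g inj m by (intro degree_le_degree_sum_of_distinct_degrees) (auto simp: inj_on_def)
  also have "sum g (Poly_Mapping.keys f) = poly (exp_pullback_poly p (weighted_mat N c) f) 1"
    unfolding poly_exp_pullback_poly_1 g_def E_def ..
  finally show ?thesis
    using g[OF m] by simp
qed

lemma digit_expansion_unique:
  fixes A B :: "nat \<Rightarrow> nat"
  assumes "\<forall>k<M. A k < \<beta>" "\<forall>k<M. B k < \<beta>"
    and "(\<Sum>k<M. A k * \<beta> ^ k) = (\<Sum>k<M. B k * \<beta> ^ k)" and "k < M"
  shows "A k = B k"
  using assms
proof (induction M arbitrary: A B k)
  case 0
  then show ?case by simp
next
  case (Suc M)
  have shift: "(\<Sum>k<Suc M. F k * \<beta> ^ k) = F 0 + \<beta> * (\<Sum>k<M. F (Suc k) * \<beta> ^ k)" for F :: "nat \<Rightarrow> nat"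
    unfolding sum.lessThan_Suc_shift by (simp add: sum_distrib_left mult.left_commute)
  have eq: "A 0 + \<beta> * (\<Sum>k<M. A (Suc k) * \<beta> ^ k) = B 0 + \<beta> * (\<Sum>k<M. B (Suc k) * \<beta> ^ k)"
    using Suc.prems(3) by (simp only: shift)
  have "A 0 < \<beta>" "B 0 < \<beta>" using Suc.prems by auto
  then have A0: "A 0 = B 0"
    using arg_cong[OF eq, of "\<lambda>x. x mod \<beta>"] by simp
  with eq \<open>A 0 < \<beta>\<close> have "(\<Sum>k<M. A (Suc k) * \<beta> ^ k) = (\<Sum>k<M. B (Suc k) * \<beta> ^ k)"
    by simp
  then have "A (Suc k') = B (Suc k')" if "k' < M" for k'
    using Suc.IH[of "\<lambda>k. A (Suc k)" "\<lambda>k. B (Suc k)" k'] Suc.prems(1,2) that by auto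
  then show ?case using A0 Suc.prems(4) by (cases k) auto
qed

definition pair_index :: "nat \<Rightarrow> nat \<times> nat \<Rightarrow> nat" where
  "pair_index N v = (snd v - fst v) * N + fst v"

definition pair_of_index :: "nat \<Rightarrow> nat \<Rightarrow> nat \<times> nat" where
  "pair_of_index N k = (k mod N, k mod N + k div N)"

lemma pair_index_less: "(i,j) \<in> upper_pairs N \<Longrightarrow> pair_index N (i,j) < N * N"
proof -
  assume "(i,j) \<in> upper_pairs N"
  then have "i < j" "j < N" by (auto simp: upper_pairs_def)
  then have "(j - i) * N + i < (j - i + 1) * N" by simp
  also have "\<dots> \<le> N * N" using \<open>i < j\<close> \<open>j < N\<close> by (intro mult_right_mono) auto
  finally show ?thesis by (simp add: pair_index_def)
qed

lemma pair_of_index_pair_index: "(i,j) \<in> upper_pairs N \<Longrightarrow> pair_of_index N (pair_index N (i,j)) = (i,j)"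
  by (auto simp: upper_pairs_def pair_index_def pair_of_index_def)

lemma pair_index_pair_of_index: "0 < N \<Longrightarrow> pair_index N (pair_of_index N k) = k"
  by (simp add: pair_index_def pair_of_index_def)

lemma power_add_power_less:
  fixes \<beta> :: nat
  assumes "2 \<le> \<beta>" "a \<noteq> b" "a < s" "b < s"
  shows "\<beta> ^ a + \<beta> ^ b < \<beta> ^ s"
proof -
  have "\<beta> ^ x + \<beta> ^ y < \<beta> ^ s" if "x < y" "y < s" for x y
  proof -
    have "\<beta> ^ x + \<beta> ^ y < 2 * \<beta> ^ y" using that assms(1) by (simp add: power_strict_increasing)
    also have "\<dots> \<le> \<beta> ^ Suc y" using assms(1) by simp
    also have "\<dots> \<le> \<beta> ^ s" using that assms(1) by (intro power_increasing) auto
    finally show ?thesis .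
  qed
  then show ?thesis using assms by (metis add.commute linorder_neqE_nat)
qed

definition kronecker_weight :: "nat \<Rightarrow> nat \<Rightarrow> nat \<Rightarrow> nat \<times> nat \<Rightarrow> nat" where
  "kronecker_weight N W \<beta> v = W * (snd v - fst v) + \<beta> ^ pair_index N v"

lemma kronecker_weight_superadditive:
  assumes "2 \<le> \<beta>"
  shows "superadditive_weights N (kronecker_weight N W \<beta>)"
  unfolding superadditive_weights_def
proof (intro conjI allI impI)
  fix i j assume "i < j" "j < N"
  then show "0 < kronecker_weight N W \<beta> (i,j)" using assms by (simp add: kronecker_weight_def)
next
  fix i k j assume ikj: "i < k" "k < j" "j < N"
  have "W * (k - i) + W * (j - k) = W * (j - i)"
    using ikj by (simp flip: add_mult_distrib2)
  moreover have "\<beta> ^ pair_index N (i,k) + \<beta> ^ pair_index N (k,j) < \<beta> ^ pair_index N (i,j)"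
  proof (rule power_add_power_less[OF assms])
    have "pair_index N (i,k) mod N = i" "pair_index N (k,j) mod N = k"
      using ikj by (simp_all add: pair_index_def)
    then show "pair_index N (i,k) \<noteq> pair_index N (k,j)"
      using ikj by auto
    show "pair_index N (i,k) < pair_index N (i,j)" using ikj by (simp add: pair_index_def)
    have "(j - k) * N + k < (j - k + 1) * N" using ikj by simp
    also have "\<dots> \<le> (j - i) * N" using ikj by (intro mult_right_mono) auto
    finally show "pair_index N (k,j) < pair_index N (i,j)" by (simp add: pair_index_def)
  qed
  ultimately show "kronecker_weight N W \<beta> (i,k) + kronecker_weight N W \<beta> (k,j) < kronecker_weight N W \<beta> (i,j)"
    by (simp add: kronecker_weight_def)
qed

lemma kronecker_weight_bounds:
  assumes "2 \<le> \<beta>" "v \<in> upper_pairs N"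
  shows "W \<le> kronecker_weight N W \<beta> v \<and> kronecker_weight N W \<beta> v \<le> W * (N - 1) + \<beta> ^ (N * N)"
proof -
  obtain i j where v: "v = (i,j)" "i < j" "j < N" using assms(2) by (auto simp: upper_pairs_def)
  have "W \<le> W * (j - i)" using v by auto
  moreover have "W * (j - i) \<le> W * (N - 1)" using v by auto
  moreover have "\<beta> ^ pair_index N v \<le> \<beta> ^ (N * N)"
    using pair_index_less assms v by (intro power_increasing) (auto simp: less_imp_le)
  ultimately show ?thesis using v by (simp add: kronecker_weight_def add_mono trans_le_add1)
qed

lemma mon_weight_pair_index_digits:
  assumes "Poly_Mapping.keys m \<subseteq> upper_pairs N"
  shows "mon_weight (\<lambda>v. \<beta> ^ pair_index N v) m = (\<Sum>k<N*N. Poly_Mapping.lookup m (pair_of_index N k) * \<beta> ^ k)"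
proof (cases "N = 0")
  case True
  then show ?thesis using assms by (simp add: mon_weight_def upper_pairs_def)
next
  case False
  then have inj: "inj_on (pair_of_index N) {..<N*N}"
    by (intro inj_on_inverseI[where g = "pair_index N"]) (simp add: pair_index_pair_of_index)
  have "Poly_Mapping.keys m \<subseteq> pair_of_index N ` {..<N*N}"
  proof
    fix v assume "v \<in> Poly_Mapping.keys m"
    then have "v \<in> upper_pairs N" using assms by blast
    then have "pair_index N v < N * N" "pair_of_index N (pair_index N v) = v"
      using pair_index_less pair_of_index_pair_index by (cases v; blast)+
    then show "v \<in> pair_of_index N ` {..<N*N}" by (metis image_eqI lessThan_iff)
  qed
  then have "mon_weight (\<lambda>v. \<beta> ^ pair_index N v) m =
      (\<Sum>v\<in>pair_of_index N ` {..<N*N}. Poly_Mapping.lookup m v * \<beta> ^ pair_index N v)"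
    unfolding mon_weight_def by (intro sum.mono_neutral_left) (auto simp: in_keys_iff)
  also have "\<dots> = (\<Sum>k<N*N. Poly_Mapping.lookup m (pair_of_index N k) * \<beta> ^ k)"
    using False by (simp add: sum.reindex[OF inj] pair_index_pair_of_index)
  finally show ?thesis .
qed

lemma mon_weight_kronecker_weight_inj:
  fixes N W \<beta> :: nat
  defines "c \<equiv> kronecker_weight N W \<beta>"
  assumes keys: "Poly_Mapping.keys m \<subseteq> upper_pairs N" "Poly_Mapping.keys m' \<subseteq> upper_pairs N"
    and digits: "\<forall>v. Poly_Mapping.lookup m v < \<beta>" "\<forall>v. Poly_Mapping.lookup m' v < \<beta>"
    and small: "mon_deg m * \<beta> ^ (N * N) < W" "mon_deg m' * \<beta> ^ (N * N) < W"
    and eq: "mon_weight c m = mon_weight c m'"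
  shows "m = m'"
proof -
  let ?r = "mon_weight (\<lambda>v. \<beta> ^ pair_index N v)"
  have "0 < \<beta>" using digits(1) by (metis gr_zeroI not_less0)
  have weight_mod: "mon_weight c n mod W = ?r n"
    if "Poly_Mapping.keys n \<subseteq> upper_pairs N" "mon_deg n * \<beta> ^ (N * N) < W" for n
  proof -
    have "?r n \<le> mon_weight (\<lambda>_. \<beta> ^ (N * N)) n"
    proof (rule mon_weight_mono)
      fix v assume "v \<in> Poly_Mapping.keys n"
      then have "pair_index N v < N * N"
        using that(1) pair_index_less by (cases v) blast
      then show "\<beta> ^ pair_index N v \<le> \<beta> ^ (N * N)"
        using \<open>0 < \<beta>\<close> by (intro power_increasing) auto
    qed
    then have "?r n < W" using that(2) by (simp add: mon_weight_const mult.commute)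
    moreover have "mon_weight c n = W * mon_weight (\<lambda>v. snd v - fst v) n + ?r n"
      unfolding c_def kronecker_weight_def by (rule mon_weight_linear)
    ultimately show ?thesis by simp
  qed
  have "?r m = ?r m'"
    using weight_mod[OF keys(1) small(1)] weight_mod[OF keys(2) small(2)] eq by simp
  then have "(\<Sum>k<N*N. Poly_Mapping.lookup m (pair_of_index N k) * \<beta> ^ k) =
      (\<Sum>k<N*N. Poly_Mapping.lookup m' (pair_of_index N k) * \<beta> ^ k)"
    using keys by (simp add: mon_weight_pair_index_digits)
  then have digit_eq: "Poly_Mapping.lookup m (pair_of_index N k) = Poly_Mapping.lookup m' (pair_of_index N k)"
    if "k < N*N" for k
    using digit_expansion_unique[where A = "\<lambda>k. Poly_Mapping.lookup m (pair_of_index N k)"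
        and B = "\<lambda>k. Poly_Mapping.lookup m' (pair_of_index N k)" and M = "N*N"] digits that
    by blast
  have "Poly_Mapping.lookup m v = Poly_Mapping.lookup m' v" for v
  proof (cases "v \<in> upper_pairs N")
    case True
    then have "pair_index N v < N * N" "pair_of_index N (pair_index N v) = v"
      using pair_index_less pair_of_index_pair_index by (cases v; blast)+
    then show ?thesis using digit_eq[of "pair_index N v"] by simp
  next
    case False
    then have "v \<notin> Poly_Mapping.keys m" "v \<notin> Poly_Mapping.keys m'" using keys by blast+
    then show ?thesis by (simp add: in_keys_iff)
  qed
  then show ?thesis by (rule poly_mapping_eqI)
qed

lemma exists_separating_weights:
  assumes F: "finite F" and keys: "\<And>m. m \<in> F \<Longrightarrow> Poly_Mapping.keys m \<subseteq> upper_pairs N"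
  shows "\<exists>c W R. superadditive_weights N c \<and> (\<forall>v\<in>upper_pairs N. W \<le> c v \<and> c v \<le> W * (N - 1) + R)
    \<and> R * D < W \<and> inj_on (mon_weight c) F"
proof -
  define T where "T = Max (mon_deg ` F)"
  define \<beta> where "\<beta> = T + 2"
  define R where "R = \<beta> ^ (N * N)"
  define W where "W = (T + D) * R + 1"
  have \<beta>: "2 \<le> \<beta>" by (simp add: \<beta>_def)
  have T: "mon_deg m \<le> T" if "m \<in> F" for m
    using F that by (simp add: T_def)
  have "inj_on (mon_weight (kronecker_weight N W \<beta>)) F"
  proof (rule inj_onI)
    fix m m' assume m: "m \<in> F" "m' \<in> F"
      and eq: "mon_weight (kronecker_weight N W \<beta>) m = mon_weight (kronecker_weight N W \<beta>) m'"
    have "\<forall>v. Poly_Mapping.lookup n v < \<beta>" if "n \<in> F" for n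
    proof
      fix v
      have "Poly_Mapping.lookup n v \<le> T" using lookup_le_mon_deg T[OF that] by (rule le_trans)
      then show "Poly_Mapping.lookup n v < \<beta>" by (simp add: \<beta>_def)
    qed
    moreover have "mon_deg n * R < W" if "n \<in> F" for n
      using mult_le_mono1[OF T[OF that], of R] unfolding W_def add_mult_distrib by linarith
    ultimately show "m = m'"
      using mon_weight_kronecker_weight_inj[OF keys keys] m eq unfolding R_def by blast
  qed
  moreover have "R * D < W" unfolding W_def add_mult_distrib by simp
  ultimately show ?thesis
    using kronecker_weight_superadditive[OF \<beta>] kronecker_weight_bounds[OF \<beta>] unfolding R_def by blast
qed

lemma kU_filt_mon_weight_le:
  fixes f :: "'a::field mpoly_ij"
  assumes inf: "infinite (UNIV :: 'a set)" and "N \<le> p" "2 \<le> p" and f: "f \<in> kU_filt p N D"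
    and c: "superadditive_weights N c" and K: "\<forall>v\<in>upper_pairs N. c v \<le> K"
    and inj: "inj_on (mon_weight c) (Poly_Mapping.keys f)" and m: "m \<in> Poly_Mapping.keys f"
  shows "mon_weight c m \<le> K * D"
proof -
  define Q where "Q = exp_pullback_poly p (weighted_mat N c :: 'a poly mat) f"
  have fk: "f \<in> kU N" using f by (simp add: kU_filt_def)
  have "degree Q \<le> D"
    unfolding Q_def using inf \<open>N \<le> p\<close> f weighted_mat_carrier weighted_mat_strict_upper
    by (rule degree_exp_pullback_poly_le)
  moreover have "slope_bounded K Q"
    unfolding Q_def using fk
  proof (rule slope_bounded_exp_pullback_poly)
    fix n i j :: nat assume "i < j" "j < N"
    then show "degree ((weighted_mat N c ^\<^sub>m n :: 'a poly mat) $$ (i,j)) \<le> K * n"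
      using K by (intro degree_weighted_mat_pow_le_mult[OF c]) auto
  qed
  ultimately have "degree (poly Q 1) \<le> K * D"
    by (meson degree_poly_1_le_if_slope_bounded le_trans mult_le_mono2)
  moreover have "mon_weight c m \<le> degree (poly Q 1)"
    unfolding Q_def by (rule mon_weight_le_degree_poly_exp_pullback_poly_1[OF c \<open>2 \<le> p\<close> fk inj m])
  ultimately show ?thesis by simp
qed

lemma kU_filt_mon_deg_le:
  fixes f :: "'a::field mpoly_ij"
  assumes inf: "infinite (UNIV :: 'a set)" and "N \<le> p" and f: "f \<in> kU_filt p N D"
    and m: "m \<in> Poly_Mapping.keys f"
  shows "mon_deg m \<le> D * (N - 1)"
proof (cases "Poly_Mapping.keys m = {}")
  case True
  then show ?thesis by (simp add: mon_deg_def)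
next
  case False
  have fk: "f \<in> kU N" using f by (simp add: kU_filt_def)
  then have "upper_pairs N \<noteq> {}" using False kU_keys_subset_upper_pairs[OF fk m] by blast
  then have "2 \<le> p" using \<open>N \<le> p\<close> by (auto simp: upper_pairs_def)
  obtain c W R where c: "superadditive_weights N c"
    and bounds: "\<forall>v\<in>upper_pairs N. W \<le> c v \<and> c v \<le> W * (N - 1) + R"
    and "R * D < W" and inj: "inj_on (mon_weight c) (Poly_Mapping.keys f)"
    using exists_separating_weights[of "Poly_Mapping.keys f" N D] kU_keys_subset_upper_pairs[OF fk] by auto
  have "W * mon_deg m \<le> mon_weight c m"
    unfolding mon_weight_const[symmetric]
    using bounds kU_keys_subset_upper_pairs[OF fk m] by (intro mon_weight_mono) blast
  also have "\<dots> \<le> (W * (N - 1) + R) * D"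
    using inf \<open>N \<le> p\<close> \<open>2 \<le> p\<close> f c _ inj m by (rule kU_filt_mon_weight_le) (use bounds in blast)
  finally have "W * mon_deg m < W * (D * (N - 1) + 1)"
    using \<open>R * D < W\<close> by (simp add: algebra_simps)
  then have "mon_deg m < D * (N - 1) + 1" using mult_less_cancel1 by blast
  then show ?thesis by simp
qed

lemma degree_exp_entry_le: "degree (exp_entry p B v) \<le> p - 1"
  unfolding exp_entry_def
  by (intro degree_sum_le) (auto intro: order.trans[OF degree_monom_le])

lemma degree_exp_pullback_le:
  assumes "\<And>m. m \<in> Poly_Mapping.keys f \<Longrightarrow> mon_deg m \<le> n"
  shows "degree (exp_pullback p B f) \<le> (p - 1) * n"
  unfolding exp_pullback_def
proof (intro degree_sum_le order.trans[OF degree_smult_le])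
  fix m assume m: "m \<in> Poly_Mapping.keys f"
  have "degree (\<Prod>v\<in>Poly_Mapping.keys m. exp_entry p B v ^ Poly_Mapping.lookup m v)
      \<le> (\<Sum>v\<in>Poly_Mapping.keys m. degree (exp_entry p B v ^ Poly_Mapping.lookup m v))"
    using degree_prod_sum_le[OF finite_keys] by (simp add: comp_def)
  also have "\<dots> \<le> (\<Sum>v\<in>Poly_Mapping.keys m. (p - 1) * Poly_Mapping.lookup m v)"
    by (intro sum_mono order.trans[OF degree_power_le] mult_le_mono1 degree_exp_entry_le)
  also have "\<dots> = (p - 1) * mon_deg m"
    by (simp add: mon_deg_def sum_distrib_left)
  also have "\<dots> \<le> (p - 1) * n"
    using assms[OF m] by simp
  finally show "degree (\<Prod>v\<in>Poly_Mapping.keys m. exp_entry p B v ^ Poly_Mapping.lookup m v) \<le> (p - 1) * n" .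
qed simp

theorem proposition3p8:
  fixes p N e d :: nat
  assumes "CHAR('a::alg_closed_field) = p" and "p > 0"
    and "N \<le> p"
    and "e * (N - 1) < d"
  shows "(kU_filt p N (e - 1) :: 'a mpoly_ij set) \<subseteq> kU_lt N d
         \<and> (kU_lt N d :: 'a mpoly_ij set) \<subseteq> kU_filt p N ((p - 1) * (d - 1))"
proof
  show "(kU_filt p N (e - 1) :: 'a mpoly_ij set) \<subseteq> kU_lt N d"
  proof
    fix f :: "'a mpoly_ij" assume f: "f \<in> kU_filt p N (e - 1)"
    have "mon_deg m < d" if "m \<in> Poly_Mapping.keys f" for m
    proof -
      have "mon_deg m \<le> (e - 1) * (N - 1)"
        using alg_closed_field_infinite assms(3) f that by (rule kU_filt_mon_deg_le)
      also have "\<dots> \<le> e * (N - 1)" by simp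
      finally show ?thesis using assms(4) by simp
    qed
    then show "f \<in> kU_lt N d" using f by (simp add: kU_lt_def kU_filt_def)
  qed
  show "(kU_lt N d :: 'a mpoly_ij set) \<subseteq> kU_filt p N ((p - 1) * (d - 1))"
  proof
    fix f :: "'a mpoly_ij" assume f: "f \<in> kU_lt N d"
    then have "degree (exp_pullback p B f) \<le> (p - 1) * (d - 1)" for B
      by (intro degree_exp_pullback_le) (auto simp: kU_lt_def)
    then show "f \<in> kU_filt p N ((p - 1) * (d - 1))" using f by (simp add: kU_lt_def kU_filt_def)
  qed
qed

end
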